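(* Let $X$ be a locally Hausdorff $T_1$ topological space and let $f:X\to X$ be a continuous weak topological contraction. Then $f$ has a unique fixed point.
   Context: A space $X$ is locally Hausdorff if every point has an open neighbourhood $U$ such that $U$ with the subspace topology is Hausdorff. A mapping $f:X\to X$ is a weak topological contraction if for every open cover $\mathcal{U}$ of $X$ and every pair of points $x,y\in X$ there exist $n\in\mathbb{N}_0=\{0,1,2,\dots\}$ and $U\in\mathcal{U}$ such that $f^n[\{x,y\}]\subseteq U$, where $f^n$ is the $n$-fold iterate and $f^0$ the identity. *)

theory Defs
  imports "HOL-Analysis.Analysis"
begin

definition locally_Hausdorff :: "'a topology \<Rightarrow> bool" where
  "locally_Hausdorff X \<longleftrightarrow>
     (\<forall>x\<in>topspace X. \<exists>U. openin X U \<and> x \<in> U \<and> Hausdorff_space (subtopology X U))"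

definition weak_top_contraction :: "'a topology \<Rightarrow> ('a \<Rightarrow> 'a) \<Rightarrow> bool" where
  "weak_top_contraction X f \<longleftrightarrow>
     (\<forall>\<U>. (\<forall>U\<in>\<U>. openin X U) \<and> topspace X \<subseteq> \<Union>\<U> \<longrightarrow>
        (\<forall>x\<in>topspace X. \<forall>y\<in>topspace X.
           \<exists>n::nat. \<exists>U\<in>\<U>. (f ^^ n) ` {x, y} \<subseteq> U))"

end

theory Submission
  imports Defs
begin

text \<open>
  Two distinct fixed points never enter a common member of the cover by the complements of
  the two points, so fixed points are unique in a \<open>T\<^sub>1\<close> space.
  For existence, call an open set \<open>V\<close> displaced if \<open>V\<close> and \<open>f ` V\<close> are disjoint. Applying the
  contraction property to \<open>x\<close> and \<open>f x\<close> shows that displaced open sets cannot cover \<open>X\<close>; let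
  \<open>z\<close> be a point lying in none of them. Applied to \<open>z\<close>, \<open>f z\<close> and the cover by Hausdorff open
  sets, the contraction property puts \<open>a = f\<^sup>n z\<close> and \<open>f a\<close> into one Hausdorff open set. If
  \<open>f a \<noteq> a\<close>, separating them there yields a displaced neighbourhood of \<open>a\<close>, whose preimage
  under \<open>f\<^sup>n\<close> is a displaced neighbourhood of \<open>z\<close>; hence \<open>a\<close> is a fixed point.
\<close>

lemma funpow_fixed_point: "f x = x \<Longrightarrow> (f ^^ n) x = x"
  by (induction n) auto

lemma continuous_map_funpow: "continuous_map X X f \<Longrightarrow> continuous_map X X (f ^^ n)"
  by (induction n) (simp_all add: funpow_Suc_right continuous_map_compose)

lemma weak_top_contraction_iterates_meet:
  assumes "weak_top_contraction X f" "\<And>U. U \<in> \<U> \<Longrightarrow> openin X U" "topspace X \<subseteq> \<Union>\<U>"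
    and "x \<in> topspace X" "y \<in> topspace X"
  obtains n U where "U \<in> \<U>" "(f ^^ n) x \<in> U" "(f ^^ n) y \<in> U"
proof -
  obtain n U where "U \<in> \<U>" "(f ^^ n) ` {x, y} \<subseteq> U"
    using assms unfolding weak_top_contraction_def by meson
  then show ?thesis
    using that by blast
qed

lemma weak_top_contraction_fixed_point_unique:
  assumes "t1_space X" "weak_top_contraction X f"
    and "x \<in> topspace X" "f x = x" "y \<in> topspace X" "f y = y"
  shows "x = y"
proof (rule ccontr)
  assume "x \<noteq> y"
  let ?\<U> = "{topspace X - {x}, topspace X - {y}}"
  have "\<And>U. U \<in> ?\<U> \<Longrightarrow> openin X U"
    using \<open>t1_space X\<close> by (auto simp: t1_space_openin_delete_alt)
  moreover have "topspace X \<subseteq> \<Union>?\<U>"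
    using \<open>x \<noteq> y\<close> by auto
  ultimately obtain n U where "U \<in> ?\<U>" "(f ^^ n) x \<in> U" "(f ^^ n) y \<in> U"
    using weak_top_contraction_iterates_meet assms(2,3,5) by metis
  moreover have "(f ^^ n) x = x" "(f ^^ n) y = y"
    using funpow_fixed_point assms(4,6) by metis+
  ultimately show False
    by auto
qed

lemma weak_top_contraction_obtains_undisplaced_point:
  assumes "weak_top_contraction X f" "f ` topspace X \<subseteq> topspace X" "topspace X \<noteq> {}"
  obtains z where "z \<in> topspace X" "\<And>V. openin X V \<Longrightarrow> z \<in> V \<Longrightarrow> \<not> disjnt V (f ` V)"
proof -
  let ?\<U> = "{V. openin X V \<and> disjnt V (f ` V)}"
  have "\<not> topspace X \<subseteq> \<Union>?\<U>"
  proof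
    assume cover: "topspace X \<subseteq> \<Union>?\<U>"
    obtain x where "x \<in> topspace X"
      using assms(3) by blast
    moreover have "f x \<in> topspace X"
      using assms(2) \<open>x \<in> topspace X\<close> by blast
    ultimately obtain n V where "V \<in> ?\<U>" "(f ^^ n) x \<in> V" "(f ^^ n) (f x) \<in> V"
      using weak_top_contraction_iterates_meet[OF assms(1) _ cover] by blast
    then show False
      by (metis (no_types, lifting) disjnt_iff funpow_swap1 imageI mem_Collect_eq)
  qed
  then show ?thesis
    using that by blast
qed

lemma Hausdorff_subtopology_displaced_nbhd:
  assumes "continuous_map X X f" "openin X U" "Hausdorff_space (subtopology X U)"
    and "a \<in> U" "f a \<in> U" "f a \<noteq> a"
  obtains V where "openin X V" "a \<in> V" "disjnt V (f ` V)"
proof -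
  have "a \<in> topspace X" "f a \<in> topspace X"
    using assms(2,4,5) openin_subset by auto
  then obtain A B where "openin (subtopology X U) A" "openin (subtopology X U) B"
      "a \<in> A" "f a \<in> B" "disjnt A B"
    using assms(3-6) unfolding Hausdorff_space_def by (metis IntI topspace_subtopology)
  then have "openin X A" "openin X B" "a \<in> A" "f a \<in> B" "disjnt A B"
    using assms(2) by (auto simp: openin_open_subtopology)
  then show ?thesis
    using that[of "{x \<in> A. f x \<in> B}"] openin_continuous_map_preimage_gen[OF assms(1)]
    by (auto simp: disjnt_iff)
qed

lemma displaced_funpow_preimage:
  fixes n :: nat
  assumes "continuous_map X X f" "openin X V" "disjnt V (f ` V)"
  defines "W \<equiv> {x \<in> topspace X. (f ^^ n) x \<in> V}"
  shows "openin X W" "disjnt W (f ` W)"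
proof -
  show "openin X W"
    unfolding W_def using continuous_map_funpow[OF assms(1)] assms(2)
    by (rule openin_continuous_map_preimage)
  have "f w \<notin> W" if "w \<in> W" for w
  proof
    assume "f w \<in> W"
    then have "f ((f ^^ n) w) \<in> V"
      unfolding W_def by (simp add: funpow_swap1)
    with \<open>w \<in> W\<close> assms(3) show False
      unfolding W_def by (auto simp: disjnt_iff)
  qed
  then show "disjnt W (f ` W)"
    by (auto simp: disjnt_iff)
qed

theorem theorem16:
  fixes X :: "'a topology" and f :: "'a \<Rightarrow> 'a"
  assumes "topspace X \<noteq> {}"
    and "locally_Hausdorff X"
    and "t1_space X"
    and "continuous_map X X f"
    and "weak_top_contraction X f"
  shows "\<exists>!x. x \<in> topspace X \<and> f x = x"
proof -
  have maps: "f ` topspace X \<subseteq> topspace X"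
    using assms(4) by (rule continuous_map_image_subset_topspace)
  obtain z where z: "z \<in> topspace X"
    and undisplaced: "\<And>V. openin X V \<Longrightarrow> z \<in> V \<Longrightarrow> \<not> disjnt V (f ` V)"
    using weak_top_contraction_obtains_undisplaced_point[OF assms(5) maps assms(1)] by metis
  have "f z \<in> topspace X"
    using maps z by blast
  moreover have "topspace X \<subseteq> \<Union>{U. openin X U \<and> Hausdorff_space (subtopology X U)}"
    using assms(2) unfolding locally_Hausdorff_def by blast
  ultimately obtain n U where U: "openin X U" "Hausdorff_space (subtopology X U)"
      "(f ^^ n) z \<in> U" "(f ^^ n) (f z) \<in> U"
    using weak_top_contraction_iterates_meet[OF assms(5) _ _ z] by (metis (no_types, lifting) mem_Collect_eq)
  define a where "a = (f ^^ n) z"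
  have "f a = a"
  proof (rule ccontr)
    assume "f a \<noteq> a"
    moreover have "f a \<in> U"
      using U(4) by (simp add: a_def funpow_swap1)
    ultimately obtain V where V: "openin X V" "a \<in> V" "disjnt V (f ` V)"
      using Hausdorff_subtopology_displaced_nbhd[OF assms(4) U(1,2)] U(3) unfolding a_def by metis
    have "z \<in> {x \<in> topspace X. (f ^^ n) x \<in> V}"
      using z(1) V(2) unfolding a_def by blast
    then show False
      using displaced_funpow_preimage[OF assms(4) V(1,3)] undisplaced by blast
  qed
  moreover have "a \<in> topspace X"
    using U(1,3) openin_subset unfolding a_def by blast
  ultimately show ?thesis
    using weak_top_contraction_fixed_point_unique[OF assms(3,5)] by blast
qed

end
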